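(* Let $(\mathcal{X},\rho)$ be a metric space and $0<\varepsilon<1/32$. Let $x_1,\dots,x_m\in\mathcal{X}$ with labels $y_1,\dots,y_m\in\{-1,1\}$, let $S^+=\{x_i:y_i=1\}$ and $S^-=\{x_i:y_i=-1\}$ be both nonempty, and assume $\rho(S^+,S^-)>0$. Define $$f(x)=\min_{i\in[m]}T\Big(y_i+\frac{2\rho(x,x_i)}{\rho(S^+,S^-)}\Big),$$ where $T(z)=\max\{-1,\min\{1,z\}\}$. Let $\tilde\rho$ be a number with $1\le\tilde\rho/\rho(S^+,S^-)\le1+\varepsilon$. For $x\in\mathcal{X}$, let $a^+,a^-\in[m]$ be any indices with $x_{a^+}\in S^+$, $x_{a^-}\in S^-$, $\rho(x,x_{a^+})\le(1+\varepsilon)\rho(x,S^+)$ and $\rho(x,x_{a^-})\le(1+\varepsilon)\rho(x,S^-)$, and define $$\tilde f(x)=\min_{a\in\{a^+,a^-\}}T\Big(y_a+\frac{2\rho(x,x_a)}{\tilde\rho}\Big).$$ Then $|f(x)-\tilde f(x)|\le2\varepsilon$ for every $x\in\mathcal{X}$ (for any such choice of $a^+,a^-$).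
   Context: $\rho(A,B)=\inf_{a\in A,b\in B}\rho(a,b)$ and $\rho(x,A)=\inf_{a\in A}\rho(x,a)$. *)

theory Defs
  imports "HOL-Analysis.Analysis"
begin

definition clip :: "real \<Rightarrow> real" where
  "clip z = max (-1) (min 1 z)"

definition Splus :: "nat \<Rightarrow> (nat \<Rightarrow> 'a) \<Rightarrow> (nat \<Rightarrow> real) \<Rightarrow> 'a set" where
  "Splus m xs ys = {xs i | i. i < m \<and> ys i = 1}"

definition Sminus :: "nat \<Rightarrow> (nat \<Rightarrow> 'a) \<Rightarrow> (nat \<Rightarrow> real) \<Rightarrow> 'a set" where
  "Sminus m xs ys = {xs i | i. i < m \<and> ys i = -1}"

definition fclass :: "nat \<Rightarrow> (nat \<Rightarrow> 'a::metric_space) \<Rightarrow> (nat \<Rightarrow> real) \<Rightarrow> 'a \<Rightarrow> real" where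
  "fclass m xs ys x =
     Min ((\<lambda>i. clip (ys i + 2 * dist x (xs i) / setdist (Splus m xs ys) (Sminus m xs ys))) ` {0..<m})"

end

theory Submission
  imports Defs
begin

text \<open>A positive sample contributes \<open>T(1 + \<dots>) = 1\<close> to either minimum, so
  \<open>f(x) = T(-1 + 2 \<rho>(x,S\<^sup>-) / \<rho>(S\<^sup>+,S\<^sup>-))\<close> and \<open>f\<^sup>~(x) = T(-1 + 2 \<rho>(x,x\<^sub>a) / \<rho>\<^sup>~)\<close> with \<open>a = a\<^sup>-\<close>.
  On \<open>t \<ge> 0\<close> we have \<open>T(-1 + 2t) = 2 min(t,1) - 1\<close>, and the two arguments \<open>t\<close> agree up to a
  factor between \<open>1/(1+\<epsilon>)\<close> and \<open>1+\<epsilon>\<close>; truncation at 1 turns this multiplicative error into an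
  additive one of at most \<open>\<epsilon>\<close>. Hence only \<open>\<epsilon> \<ge> 0\<close> is needed, and the choice of \<open>a\<^sup>+\<close> is irrelevant.\<close>

lemma clip_le_one: "clip z \<le> 1"
  by (simp add: clip_def)

lemma mono_clip: "mono clip"
  by (auto simp: mono_def clip_def)

lemma clip_one_plus: "0 \<le> t \<Longrightarrow> clip (1 + t) = 1"
  by (simp add: clip_def)

lemma clip_minus_one_plus: "0 \<le> t \<Longrightarrow> clip (-1 + 2 * t) = 2 * min t 1 - 1"
  by (simp add: clip_def min_def max_def)

lemma one_minus_le_inverse_one_plus:
  fixes e :: real
  assumes "0 \<le> e"
  shows "1 - e \<le> 1 / (1 + e)"
proof -
  have "(1 - e) * (1 + e) = 1 - e * e"
    by (simp add: algebra_simps)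
  then show ?thesis
    using assms by (simp add: le_divide_eq)
qed

lemma min_one_ratio_close:
  fixes p q e :: real
  assumes "0 \<le> p" "0 \<le> e" "p / (1 + e) \<le> q" "q \<le> (1 + e) * p"
  shows "\<bar>min p 1 - min q 1\<bar> \<le> e"
proof -
  have "p - e * p \<le> p / (1 + e)"
    using mult_right_mono[OF one_minus_le_inverse_one_plus[OF assms(2)] assms(1)]
    by (simp add: algebra_simps)
  then have "p - e * p \<le> q"
    using assms by linarith
  moreover have "q \<le> p + e * p"
    using assms by (simp add: algebra_simps)
  moreover have "p \<le> 1 \<Longrightarrow> e * p \<le> e"
    using assms by (simp add: mult_left_le)
  moreover have "1 < p \<Longrightarrow> 1 - e \<le> q"
    using assms one_minus_le_inverse_one_plus divide_right_mono[of 1 p "1 + e"] by force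
  ultimately show ?thesis
    using assms(2) by (auto simp: min_def)
qed

lemma infdist_attained_finite:
  fixes A :: "'a::metric_space set"
  assumes "finite A" "A \<noteq> {}"
  obtains a where "a \<in> A" "infdist x A = dist x a"
proof -
  have "infdist x A = Min (dist x ` A)"
    using assms by (simp add: infdist_def cInf_eq_Min)
  moreover have "Min (dist x ` A) \<in> dist x ` A"
    using assms by (intro Min_in) auto
  ultimately show ?thesis
    using that by force
qed

lemma fclass_eq_clip_infdist:
  fixes xs :: "nat \<Rightarrow> 'a::metric_space"
  assumes labels: "\<forall>i<m. ys i = 1 \<or> ys i = -1"
    and nonempty: "Sminus m xs ys \<noteq> {}"
  shows "fclass m xs ys x
    = clip (-1 + 2 * infdist x (Sminus m xs ys) / setdist (Splus m xs ys) (Sminus m xs ys))"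
    (is "_ = clip (-1 + 2 * ?d / ?D)")
proof -
  let ?g = "\<lambda>i. clip (ys i + 2 * dist x (xs i) / ?D)"
  have "finite (Sminus m xs ys)"
    by (simp add: Sminus_def)
  then obtain a where "a \<in> Sminus m xs ys" "?d = dist x a"
    using nonempty infdist_attained_finite by blast
  then obtain i0 where i0: "i0 < m" "ys i0 = -1" "?d = dist x (xs i0)"
    by (auto simp: Sminus_def)
  have "clip (-1 + 2 * ?d / ?D) \<le> ?g i" if "i < m" for i
  proof (cases "ys i = 1")
    case True
    then show ?thesis
      using clip_le_one clip_one_plus[of "2 * dist x (xs i) / ?D"] by simp
  next
    case False
    then have "ys i = -1"
      using labels that by auto
    then have "?d \<le> dist x (xs i)"
      using that by (intro infdist_le) (auto simp: Sminus_def)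
    then have "-1 + 2 * ?d / ?D \<le> ys i + 2 * dist x (xs i) / ?D"
      using \<open>ys i = -1\<close> by (simp add: divide_right_mono)
    then show ?thesis
      using mono_clip by (simp add: monoD)
  qed
  moreover have "clip (-1 + 2 * ?d / ?D) = ?g i0"
    using i0 by simp
  ultimately show ?thesis
    unfolding fclass_def using i0(1) by (intro Min_eqI) auto
qed

theorem mainTheorem6:
  fixes m :: nat and xs :: "nat \<Rightarrow> 'a::metric_space" and ys :: "nat \<Rightarrow> real"
    and \<epsilon> \<rho>t :: real and x :: 'a and ap an :: nat
  assumes eps: "0 < \<epsilon>" "\<epsilon> < 1/32"
    and labels: "\<forall>i<m. ys i = 1 \<or> ys i = -1"
    and nonempty: "Splus m xs ys \<noteq> {}" "Sminus m xs ys \<noteq> {}"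
    and sep: "setdist (Splus m xs ys) (Sminus m xs ys) > 0"
    and rhot: "1 \<le> \<rho>t / setdist (Splus m xs ys) (Sminus m xs ys)"
              "\<rho>t / setdist (Splus m xs ys) (Sminus m xs ys) \<le> 1 + \<epsilon>"
    and ap: "ap < m" "ys ap = 1" "dist x (xs ap) \<le> (1 + \<epsilon>) * infdist x (Splus m xs ys)"
    and an: "an < m" "ys an = -1" "dist x (xs an) \<le> (1 + \<epsilon>) * infdist x (Sminus m xs ys)"
  shows "\<bar>fclass m xs ys x
           - min (clip (ys ap + 2 * dist x (xs ap) / \<rho>t)) (clip (ys an + 2 * dist x (xs an) / \<rho>t))\<bar>
         \<le> 2 * \<epsilon>"
proof -
  define D where "D = setdist (Splus m xs ys) (Sminus m xs ys)"
  define d where "d = infdist x (Sminus m xs ys)"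
  define p where "p = d / D"
  define q where "q = dist x (xs an) / \<rho>t"
  have D: "0 < D" "D \<le> \<rho>t" "\<rho>t \<le> (1 + \<epsilon>) * D"
    using sep rhot by (auto simp: D_def field_simps)
  have d: "0 \<le> d" "d \<le> dist x (xs an)" "dist x (xs an) \<le> (1 + \<epsilon>) * d"
    using an by (auto simp: d_def infdist_nonneg Sminus_def intro: infdist_le)
  have "p / (1 + \<epsilon>) \<le> q"
    using D d eps by (auto simp: p_def q_def mult.commute intro!: frac_le)
  moreover have "q \<le> (1 + \<epsilon>) * p"
    using D d eps frac_le[of "(1 + \<epsilon>) * d" "dist x (xs an)" D \<rho>t] by (simp add: p_def q_def)
  ultimately have close: "\<bar>min p 1 - min q 1\<bar> \<le> \<epsilon>"
    using min_one_ratio_close[of p \<epsilon> q] D d eps by (simp add: p_def)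
  have "fclass m xs ys x = 2 * min p 1 - 1"
    using fclass_eq_clip_infdist[OF labels nonempty(2)] clip_minus_one_plus[of p] D d
    by (simp add: p_def d_def D_def)
  moreover have "clip (ys ap + 2 * dist x (xs ap) / \<rho>t) = 1"
    using ap(2) D by (simp add: clip_one_plus)
  moreover have "clip (ys an + 2 * dist x (xs an) / \<rho>t) = 2 * min q 1 - 1"
    using an(2) D clip_minus_one_plus[of q] by (simp add: q_def)
  ultimately show ?thesis
    using close by (simp add: abs_mult)
qed

end
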